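(* Let $m\ge1$ be an integer and, for each $s\in(0,m)$, let $\sigma_s$ be a Borel probability measure on $\mathbb S^{N-1}$. Then $$\lim_{s\to0^+}\frac{c_{m,s}}{s}M_{s,\sigma_s}(e_s)=\frac{2}{-P^{(0)}_m},\qquad P^{(0)}_m:=\sum_{k=1}^m(-1)^k\binom{2m}{m-k}=-\frac12\binom{2m}{m}.$$
   Context: $\nu_s(U)=\int_0^\infty\int_{\mathbb S^{N-1}}\chi_U(r\theta)r^{-1-2s}\sigma_s(d\theta)\,dr$; $M_{s,\sigma}(e)=\int_{\mathbb S^{N-1}}|e\cdot\theta|^{2s}\sigma(d\theta)$; $e_s$ is a maximum point of $M_{s,\sigma_s}$ on $\mathbb S^{N-1}$; for an integer $m>s$, $c_{m,s}>0$ is defined by $\frac2{c_{m,s}}=2^m\int_{\mathbb R^N}(1-\cos(e_s\cdot y))^m\,\nu_s(dy)$. *)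

theory Defs
  imports "HOL-Probability.Probability"
begin

text \<open>The L\'evy measure nu_s on R^N (R^N rendered as a euclidean_space 'a):
  nu_s(U) = int_0^inf int_S chi_U(r theta) r^(-1-2s) sigma(d theta) dr,
  i.e. the image of (r^(-1-2s) dr on (0,inf)) x sigma under (r,theta) -> r theta.\<close>
definition nu_s :: "real \<Rightarrow> 'a::euclidean_space measure \<Rightarrow> 'a measure" where
  "nu_s s \<sigma> = distr
     (pair_measure (density lborel (\<lambda>r. indicator {0<..} r * ennreal (r powr (- 1 - 2 * s)))) \<sigma>)
     borel (\<lambda>(r, \<theta>). r *\<^sub>R \<theta>)"

definition M_s :: "real \<Rightarrow> 'a::euclidean_space measure \<Rightarrow> 'a \<Rightarrow> real" where
  "M_s s \<sigma> e = (\<integral>\<theta>. \<bar>e \<bullet> \<theta>\<bar> powr (2 * s) \<partial>\<sigma>)"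

definition c_ms :: "nat \<Rightarrow> real \<Rightarrow> 'a::euclidean_space measure \<Rightarrow> 'a \<Rightarrow> real" where
  "c_ms m s \<sigma> e = 2 / (2 ^ m * (\<integral>y. (1 - cos (e \<bullet> y)) ^ m \<partial>(nu_s s \<sigma>)))"

definition P0 :: "nat \<Rightarrow> real" where
  "P0 m = (\<Sum>k=1..m. (-1) ^ k * real ((2 * m) choose (m - k)))"

end

theory Submission
  imports Defs
begin

text \<open>Expanding \<open>(1 - cos t)^m\<close> binomially in \<open>e^{\<plusminus>it/2}\<close> writes it as its mean value
  \<open>A = binom(2m, m) / 2^m\<close> plus a trigonometric polynomial without constant term, which has a
  bounded primitive. Integrating by parts against \<open>r^(-1-2s)\<close> then gives
  \<open>\<integral>\<^sub>0\<^sup>\<infinity> r^(-1-2s) (1 - cos r)^m dr = A / (2s) + O(1)\<close> as \<open>s \<rightarrow> 0+\<close>.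
  In polar coordinates, scaling \<open>r\<close> by \<open>|e \<bullet> \<theta>|\<close> factors the integral defining
  \<open>2 / c_{m,s}\<close> as \<open>2^m\<close> times this radial integral times \<open>M_{s,\<sigma>}(e)\<close>, and \<open>M_{s,\<sigma>}(e) > 0\<close>
  at a maximum point. Hence \<open>c_{m,s} M_{s,\<sigma>}(e) / s \<rightarrow> 4 / (2^m A)\<close>, and
  \<open>2^m A / 2 = -P0 m\<close> because the alternating sum of the binomial coefficients
  \<open>binom(2m, j)\<close> vanishes and is symmetric about its middle term.\<close>

section \<open>The Fourier expansion of \<open>(1 - cos t)^m\<close>\<close>

lemma one_minus_cos_eq_cis: "complex_of_real (1 - cos t) = - ((cis (t/2) - cis (-t/2))^2) / 2"
proof -
  have "cos t = (cos (t/2))^2 - (sin (t/2))^2"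
    using cos_double[of "t/2"] by simp
  then show ?thesis
    by (simp add: complex_eq_iff power2_eq_square algebra_simps)
qed

definition cos_power_coeff :: "nat \<Rightarrow> nat \<Rightarrow> real" where
  "cos_power_coeff m j = (-1/2)^m * (-1)^(2*m-j) * real (2*m choose j)"

lemma one_minus_cos_power_expansion:
  "(1 - cos t)^m = (\<Sum>j\<le>2*m. cos_power_coeff m j * cos ((real j - real m) * t))"
proof -
  define X where "X = cis (t/2) - cis (-t/2)"
  have "complex_of_real ((1 - cos t)^m) = (- (X^2) / 2)^m"
    by (simp only: of_real_power one_minus_cos_eq_cis X_def)
  also have "\<dots> = (-1/2)^m * X^(2*m)"
    unfolding power_mult power_mult_distrib[symmetric] by simp
  also have "X^(2*m) = (\<Sum>j\<le>2*m. of_nat (2*m choose j) * cis (t/2)^j * (- cis (-t/2))^(2*m-j))"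
    unfolding X_def diff_conv_add_uminus by (rule binomial_ring)
  also have "\<dots> = (\<Sum>j\<le>2*m. of_nat (2*m choose j) * (-1)^(2*m-j) * cis ((real j - real m) * t))"
  proof (rule sum.cong[OF refl])
    fix j assume "j \<in> {..2*m}"
    have "(- cis (-t/2))^(2*m-j) = (-1)^(2*m-j) * cis (real (2*m-j) * (-t/2))"
      by (subst power_minus) (simp only: Complex.DeMoivre)
    then have "cis (t/2)^j * (- cis (-t/2))^(2*m-j)
        = (-1)^(2*m-j) * (cis (real j * (t/2)) * cis (real (2*m-j) * (-t/2)))"
      by (simp only: Complex.DeMoivre mult_ac)
    also have "cis (real j * (t/2)) * cis (real (2*m-j) * (-t/2)) = cis ((real j - real m) * t)"
      using \<open>j \<in> {..2*m}\<close> by (simp add: cis_mult of_nat_diff algebra_simps)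
    finally show "of_nat (2*m choose j) * cis (t/2)^j * (- cis (-t/2))^(2*m-j)
        = of_nat (2*m choose j) * (-1)^(2*m-j) * cis ((real j - real m) * t)"
      by (simp add: mult.assoc)
  qed
  finally have "(1 - cos t)^m
      = Re ((-1/2)^m * (\<Sum>j\<le>2*m. of_nat (2*m choose j) * (-1)^(2*m-j) * cis ((real j - real m) * t)))"
    by (metis Re_complex_of_real)
  also have "\<dots> = (\<Sum>j\<le>2*m. cos_power_coeff m j * cos ((real j - real m) * t))"
    by (simp add: sum_distrib_left Re_sum cos_power_coeff_def mult_ac)
  finally show ?thesis .
qed

lemma cos_power_coeff_middle: "cos_power_coeff m m = real (2*m choose m) / 2^m"
proof -
  have "(-1/2::real)^m * (-1)^(2*m-m) = (1/2)^m"
    by (simp add: power_mult_distrib[symmetric])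
  then show ?thesis unfolding cos_power_coeff_def by (simp add: field_simps)
qed

text \<open>The summand with \<open>j = m\<close> vanishes because division by zero yields zero, so this is the
  primitive of \<open>(1 - cos t)^m\<close> with its constant Fourier coefficient removed.\<close>
definition cos_power_osc_primitive :: "nat \<Rightarrow> real \<Rightarrow> real" where
  "cos_power_osc_primitive m t =
     (\<Sum>j\<le>2*m. cos_power_coeff m j * (sin ((real j - real m) * t) / (real j - real m)))"

lemma cos_power_osc_primitive_has_derivative:
  "(cos_power_osc_primitive m has_real_derivative (1 - cos t)^m - cos_power_coeff m m) (at t)"
proof -
  define k where "k j = real j - real m" for j
  have "(cos_power_osc_primitive m has_real_derivative
          (\<Sum>j\<le>2*m. cos_power_coeff m j * (cos (k j * t) * k j / k j))) (at t)"
    unfolding cos_power_osc_primitive_def k_def[symmetric]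
    by (rule DERIV_sum) (auto intro!: derivative_eq_intros simp: field_simps)
  also have "(\<Sum>j\<le>2*m. cos_power_coeff m j * (cos (k j * t) * k j / k j))
      = (\<Sum>j\<in>{..2*m}-{m}. cos_power_coeff m j * cos (k j * t))"
    by (subst sum.remove[of _ m]) (auto simp: k_def intro!: sum.cong)
  also have "\<dots> = (\<Sum>j\<le>2*m. cos_power_coeff m j * cos (k j * t)) - cos_power_coeff m m"
    by (subst sum.remove[of _ m]) (auto simp: k_def)
  finally show ?thesis
    unfolding k_def one_minus_cos_power_expansion .
qed

lemma abs_cos_power_osc_primitive_le:
  "\<bar>cos_power_osc_primitive m t\<bar> \<le> (\<Sum>j\<le>2*m. \<bar>cos_power_coeff m j\<bar>)"
  unfolding cos_power_osc_primitive_def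
proof (rule order_trans[OF sum_abs sum_mono])
  fix j
  let ?k = "real j - real m"
  have "\<bar>sin (?k * t) / ?k\<bar> \<le> 1"
  proof (cases "j = m")
    case False
    then have k: "1 \<le> \<bar>?k\<bar>" by (cases "j < m") auto
    have "\<bar>sin (?k * t)\<bar> \<le> 1" by simp
    with k have "\<bar>sin (?k * t)\<bar> \<le> \<bar>?k\<bar>" by linarith
    with k show ?thesis by (simp add: abs_divide divide_le_eq_1_pos)
  qed simp
  then have "\<bar>cos_power_coeff m j\<bar> * \<bar>sin (?k * t) / ?k\<bar> \<le> \<bar>cos_power_coeff m j\<bar> * 1"
    by (intro mult_left_mono) auto
  then show "\<bar>cos_power_coeff m j * (sin (?k * t) / ?k)\<bar> \<le> \<bar>cos_power_coeff m j\<bar>"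
    by (simp add: abs_mult)
qed

lemma P0_eq_neg_half_central_binomial:
  assumes "m \<ge> 1"
  shows "P0 m = - (1/2) * real ((2 * m) choose m)"
proof -
  define b where "b j = (-1)^j * real ((2*m) choose j)" for j
  have lower: "(\<Sum>j<m. b j) = (-1)^m * P0 m"
  proof -
    have "(\<Sum>j<m. b j) = (\<Sum>k=1..m. b (m-k))"
      by (rule sum.reindex_bij_witness[of _ "\<lambda>j. m-j" "\<lambda>j. m-j"]) auto
    also have "\<dots> = (-1)^m * P0 m"
      unfolding P0_def b_def sum_distrib_left
      by (rule sum.cong) (auto simp flip: neg_one_power_add_eq_neg_one_power_diff simp: power_add)
    finally show ?thesis .
  qed
  have upper: "(\<Sum>j\<in>{m<..2*m}. b j) = (-1)^m * P0 m"
  proof -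
    have "(\<Sum>j\<in>{m<..2*m}. b j) = (\<Sum>k=1..m. b (m+k))"
      by (rule sum.reindex_bij_witness[of _ "\<lambda>k. m+k" "\<lambda>j. j-m"]) auto
    also have "\<dots> = (-1)^m * P0 m"
      unfolding P0_def b_def sum_distrib_left
    proof (rule sum.cong[OF refl])
      fix k assume "k \<in> {1..m}"
      then have "2*m choose (m+k) = 2*m choose (m-k)"
        by (subst binomial_symmetric) (auto simp: algebra_simps)
      then show "(-1)^(m+k) * real (2*m choose (m+k)) = (-1)^m * ((-1)^k * real (2*m choose (m-k)))"
        by (simp add: power_add)
    qed
    finally show ?thesis .
  qed
  have split: "{..2*m} = {..<m} \<union> ({m} \<union> {m<..2*m})" by auto
  have "(\<Sum>j\<le>2*m. b j) = (\<Sum>j<m. b j) + (b m + (\<Sum>j\<in>{m<..2*m}. b j))"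
    unfolding split by (subst sum.union_disjoint, auto)+
  moreover have "(\<Sum>j\<le>2*m. b j) = 0"
    unfolding b_def using choose_alternating_sum[of "2*m"] assms by simp
  ultimately have "(-1)^m * (2 * P0 m + real (2*m choose m)) = 0"
    unfolding lower upper by (simp add: b_def algebra_simps)
  then show ?thesis by simp
qed

section \<open>Integrals against \<open>x powr (-1 - 2 * s)\<close> on \<open>[1, \<infinity>)\<close>\<close>

lemma powr_weighted_primitive_has_derivative:
  fixes G :: "real \<Rightarrow> real"
  assumes s: "s > 0" and x: "x > 0"
    and G: "(G has_real_derivative f x - A) (at x)"
  shows "((\<lambda>x. G x * x powr (-1 - 2 * s) - A * x powr (-2 * s) / (2 * s)) has_real_derivative
           x powr (-1 - 2 * s) * f x - (1 + 2 * s) * G x * x powr (-2 - 2 * s)) (at x)"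
proof -
  have exps: "-1 - 2 * s - 1 = -2 - 2 * s" "-2 * s - 1 = -1 - 2 * s" by simp_all
  have "G x * ((-1 - 2 * s) * x powr (-1 - 2 * s - 1)) + (f x - A) * x powr (-1 - 2 * s)
          - A * ((-2 * s) * x powr (-2 * s - 1)) / (2 * s)
      = x powr (-1 - 2 * s) * f x - (1 + 2 * s) * G x * x powr (-2 - 2 * s)"
    unfolding exps using s by (simp add: field_simps)
  moreover have "((\<lambda>x. G x * x powr (-1 - 2 * s) - A * x powr (-2 * s) / (2 * s)) has_real_derivative
          G x * ((-1 - 2 * s) * x powr (-1 - 2 * s - 1)) + (f x - A) * x powr (-1 - 2 * s)
          - A * ((-2 * s) * x powr (-2 * s - 1)) / (2 * s)) (at x)"
    by (intro DERIV_diff DERIV_mult' G DERIV_cdivide DERIV_cmult has_real_derivative_powr x)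
  ultimately show ?thesis
    by simp
qed

lemma has_integral_powr_Icc_1:
  fixes s y :: real
  assumes y: "1 \<le> y"
  shows "((\<lambda>x. (1 + 2 * s) * x powr (-2 - 2 * s)) has_integral (1 - y powr (-1 - 2 * s))) {1..y}"
proof -
  have "((\<lambda>x. (1 + 2 * s) * x powr (-2 - 2 * s)) has_integral
          ((- (y powr (-1 - 2 * s))) - (- (1 powr (-1 - 2 * s))))) {1..y}"
  proof (intro fundamental_theorem_of_calculus y)
    fix x :: real assume "x \<in> {1..y}"
    then have "((\<lambda>x. - (x powr (-1 - 2 * s))) has_real_derivative (1 + 2 * s) * x powr (-2 - 2 * s)) (at x)"
      by (auto intro!: derivative_eq_intros simp: field_simps)
    then show "((\<lambda>x. - (x powr (-1 - 2 * s))) has_vector_derivative (1 + 2 * s) * x powr (-2 - 2 * s))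
        (at x within {1..y})"
      by (simp add: has_real_derivative_iff_has_vector_derivative[symmetric] has_field_derivative_at_within)
  qed
  then show ?thesis by simp
qed

lemma abs_integral_bounded_times_powr_le:
  fixes G :: "real \<Rightarrow> real"
  assumes s: "0 \<le> s" and y: "1 \<le> y" and G_bound: "\<And>x. \<bar>G x\<bar> \<le> C"
    and G_int: "(\<lambda>x. (1 + 2 * s) * G x * x powr (-2 - 2 * s)) integrable_on {1..y}"
  shows "\<bar>integral {1..y} (\<lambda>x. (1 + 2 * s) * G x * x powr (-2 - 2 * s))\<bar> \<le> C"
proof -
  note weight_int = has_integral_mult_right[OF has_integral_powr_Icc_1[OF y], of C s]
  have "norm (integral {1..y} (\<lambda>x. (1 + 2 * s) * G x * x powr (-2 - 2 * s)))
      \<le> integral {1..y} (\<lambda>x. C * ((1 + 2 * s) * x powr (-2 - 2 * s)))"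
  proof (rule Henstock_Kurzweil_Integration.integral_norm_bound_integral[OF G_int])
    show "(\<lambda>x. C * ((1 + 2 * s) * x powr (-2 - 2 * s))) integrable_on {1..y}"
      using weight_int by blast
    fix x
    have "norm ((1 + 2 * s) * G x * x powr (-2 - 2 * s)) = \<bar>G x\<bar> * ((1 + 2 * s) * x powr (-2 - 2 * s))"
      using s by (simp add: abs_mult)
    also have "\<dots> \<le> C * ((1 + 2 * s) * x powr (-2 - 2 * s))"
      using s by (intro mult_right_mono G_bound) auto
    finally show "norm ((1 + 2 * s) * G x * x powr (-2 - 2 * s)) \<le> C * ((1 + 2 * s) * x powr (-2 - 2 * s))" .
  qed
  also have "\<dots> = C * (1 - y powr (-1 - 2 * s))"
    using weight_int by (rule integral_unique)
  also have "\<dots> \<le> C"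
    using G_bound[of 0] by (simp add: mult_left_le)
  finally show ?thesis by simp
qed

text \<open>Integration by parts against the bounded primitive \<open>G\<close>: the two boundary terms and
  the remaining integral each contribute at most \<open>C\<close>.\<close>
lemma powr_weighted_integral_estimate:
  fixes f G :: "real \<Rightarrow> real"
  assumes s: "0 < s" and y: "1 \<le> y"
    and G_deriv: "\<And>x. (G has_real_derivative f x - A) (at x)"
    and G_bound: "\<And>x. \<bar>G x\<bar> \<le> C"
    and f_cont: "continuous_on {1..y} f"
  shows "\<bar>integral {1..y} (\<lambda>x. x powr (-1 - 2 * s) * f x) - A * (1 - y powr (-2 * s)) / (2 * s)\<bar>
           \<le> 3 * C"
proof -
  define h where "h x = x powr (-1 - 2 * s) * f x" for x
  define \<Phi> where "\<Phi> = (\<lambda>x. G x * x powr (-1 - 2 * s) - A * x powr (-2 * s) / (2 * s))"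
  define q where "q x = (1 + 2 * s) * G x * x powr (-2 - 2 * s)" for x
  have h_int: "h integrable_on {1..y}"
    unfolding h_def by (intro integrable_continuous_interval continuous_intros f_cont) auto
  have "((\<lambda>x. h x - q x) has_integral (\<Phi> y - \<Phi> 1)) {1..y}"
  proof (intro fundamental_theorem_of_calculus y)
    fix x :: real assume "x \<in> {1..y}"
    then have "(\<Phi> has_real_derivative h x - q x) (at x)"
      unfolding \<Phi>_def h_def q_def by (intro powr_weighted_primitive_has_derivative s G_deriv) auto
    then show "(\<Phi> has_vector_derivative h x - q x) (at x within {1..y})"
      by (simp add: has_real_derivative_iff_has_vector_derivative[symmetric] has_field_derivative_at_within)
  qed
  from has_integral_diff[OF integrable_integral[OF h_int] this]
  have q_int: "(q has_integral (integral {1..y} h - (\<Phi> y - \<Phi> 1))) {1..y}"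
    by simp
  then have "\<bar>integral {1..y} q\<bar> \<le> C"
    unfolding q_def using s y G_bound by (intro abs_integral_bounded_times_powr_le) auto
  moreover have "\<bar>G y * y powr (-1 - 2 * s)\<bar> \<le> C"
  proof -
    have "y powr (-1 - 2 * s) \<le> 1"
      using powr_mono[of "-1 - 2 * s" 0 y] y s by simp
    then have "\<bar>G y\<bar> * y powr (-1 - 2 * s) \<le> C * 1"
      using G_bound[of y] G_bound[of 0] by (intro mult_mono) auto
    then show ?thesis
      by (simp add: abs_mult)
  qed
  moreover have "\<bar>G 1\<bar> \<le> C"
    by (rule G_bound)
  moreover have "integral {1..y} h = \<Phi> y - \<Phi> 1 + integral {1..y} q"
    using integral_unique[OF q_int] by simp
  moreover have "\<Phi> y - \<Phi> 1 = G y * y powr (-1 - 2 * s) - G 1 + A * (1 - y powr (-2 * s)) / (2 * s)"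
    unfolding \<Phi>_def using s by (simp add: field_simps)
  ultimately show ?thesis
    unfolding h_def[abs_def] by linarith
qed

lemma tendsto_nn_integral_Icc_atLeast:
  fixes f :: "real \<Rightarrow> real"
  assumes f_borel[measurable]: "f \<in> borel_measurable borel"
    and cont: "continuous_on {a..} f" and nonneg: "\<And>x. a \<le> x \<Longrightarrow> 0 \<le> f x"
  shows "(\<lambda>n. ennreal (integral {a..a + real n} f))
           \<longlonglongrightarrow> (\<integral>\<^sup>+x. ennreal (f x) * indicator {a..} x \<partial>lborel)"
proof -
  define F where "F n x = ennreal (f x) * indicator {a..a + real n} x" for n :: nat and x :: real
  have F_integral: "integral\<^sup>N lborel (F n) = ennreal (integral {a..a + real n} f)" for n
  proof -
    have "(f has_integral (integral {a..a + real n} f)) {a..a + real n}"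
      by (intro integrable_integral integrable_continuous_interval continuous_on_subset[OF cont]) auto
    then show ?thesis
      unfolding F_def by (rule nn_integral_has_integral_lebesgue'[rotated]) (auto intro: nonneg)
  qed
  have F_inc: "incseq F"
    unfolding incseq_def le_fun_def F_def by (auto intro!: mult_left_mono simp: indicator_def)
  have F_borel: "F n \<in> borel_measurable lborel" for n
    unfolding F_def by measurable
  have F_lim: "(\<lambda>n. F n x) \<longlonglongrightarrow> ennreal (f x) * indicator {a..} x" for x
  proof (rule tendsto_eventually)
    obtain N :: nat where "x - a \<le> real N" using real_arch_simple by blast
    then have "\<forall>n\<ge>N. F n x = ennreal (f x) * indicator {a..} x"
      by (auto simp: F_def indicator_def)
    then show "\<forall>\<^sub>F n in sequentially. F n x = ennreal (f x) * indicator {a..} x"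
      using eventually_sequentially by blast
  qed
  show ?thesis
    using nn_integral_LIMSEQ[OF F_inc F_borel F_lim] unfolding F_integral .
qed

lemma nn_integral_atLeast_eq_limit:
  fixes f :: "real \<Rightarrow> real"
  assumes f_borel: "f \<in> borel_measurable borel"
    and cont: "continuous_on {a..} f" and nonneg: "\<And>x. a \<le> x \<Longrightarrow> 0 \<le> f x"
    and bounded: "\<And>n. integral {a..a + real n} f \<le> B"
  obtains L where "(\<integral>\<^sup>+x. ennreal (f x) * indicator {a..} x \<partial>lborel) = ennreal L"
    and "(\<lambda>n. integral {a..a + real n} f) \<longlonglongrightarrow> L" and "0 \<le> L"
proof -
  define X where "X n = integral {a..a + real n} f" for n :: nat
  have f_int: "f integrable_on {a..a + real n}" for n
    by (intro integrable_continuous_interval continuous_on_subset[OF cont]) auto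
  have X_nonneg: "0 \<le> X n" for n
    unfolding X_def by (intro integral_nonneg f_int nonneg) auto
  have "incseq X"
    unfolding incseq_def X_def by (auto intro!: integral_subset_le f_int nonneg)
  then obtain L where L: "X \<longlonglongrightarrow> L" "\<forall>n. X n \<le> L"
    using incseq_convergent bounded unfolding X_def by blast
  have "(\<lambda>n. ennreal (X n)) \<longlonglongrightarrow> (\<integral>\<^sup>+x. ennreal (f x) * indicator {a..} x \<partial>lborel)"
    unfolding X_def by (rule tendsto_nn_integral_Icc_atLeast[OF f_borel cont nonneg])
  moreover have "(\<lambda>n. ennreal (X n)) \<longlonglongrightarrow> ennreal L"
    using L(1) by (rule tendsto_ennrealI)
  moreover have "0 \<le> L"
    using X_nonneg[of 0] L(2) by (meson order_trans)
  ultimately show ?thesis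
    using that L(1) LIMSEQ_unique unfolding X_def by blast
qed

section \<open>The radial integral\<close>

definition radial_integrand :: "nat \<Rightarrow> real \<Rightarrow> real \<Rightarrow> real" where
  "radial_integrand m s x = x powr (-1 - 2 * s) * (1 - cos x)^m"

definition radial_integral :: "nat \<Rightarrow> real \<Rightarrow> ennreal" where
  "radial_integral m s = (\<integral>\<^sup>+x. ennreal (radial_integrand m s x) * indicator {0<..} x \<partial>lborel)"

lemma radial_integrand_borel[measurable]: "radial_integrand m s \<in> borel_measurable borel"
  unfolding radial_integrand_def by measurable

lemma radial_integrand_nonneg: "0 \<le> x \<Longrightarrow> 0 \<le> radial_integrand m s x"
  unfolding radial_integrand_def by simp

lemma one_minus_cos_le_square: "1 - cos x \<le> (x::real)^2"
proof -
  have "1 - cos x = 2 * sin (x/2)^2"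
    using cos_double_sin[of "x/2"] by simp
  also have "\<dots> \<le> 2 * (x/2)^2"
  proof -
    have "sin (x/2)^2 \<le> (x/2)^2"
      using abs_sin_x_le_abs_x[of "x/2"] abs_le_square_iff by blast
    then show ?thesis by simp
  qed
  also have "\<dots> \<le> x^2"
    by (simp add: power2_eq_square)
  finally show ?thesis .
qed

lemma nn_integral_radial_integrand_Ioo_le:
  assumes s: "s < real m"
  shows "(\<integral>\<^sup>+x. ennreal (radial_integrand m s x) * indicator {0<..<1} x \<partial>lborel)
           \<le> ennreal (1 / (2 * real m - 2 * s))"
proof -
  have "(\<integral>\<^sup>+x. ennreal (radial_integrand m s x) * indicator {0<..<1} x \<partial>lborel)
      \<le> (\<integral>\<^sup>+x. ennreal (x powr (2 * real m - 1 - 2 * s)) * indicator {0..1} x \<partial>lborel)"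
  proof (rule nn_integral_mono)
    fix x :: real
    show "ennreal (radial_integrand m s x) * indicator {0<..<1} x
        \<le> ennreal (x powr (2 * real m - 1 - 2 * s)) * indicator {0..1} x"
    proof (cases "x \<in> {0<..<1}")
      case True
      then have x: "0 < x" by simp
      have "radial_integrand m s x \<le> x powr (-1 - 2 * s) * (x^2)^m"
        unfolding radial_integrand_def using one_minus_cos_le_square[of x]
        by (intro mult_left_mono power_mono) auto
      also have "\<dots> = x powr (-1 - 2 * s) * x powr (2 * real m)"
      proof -
        have "(x^2)^m = x powr (real (2 * m))"
          using x powr_realpow[of x "2 * m"] by (simp add: power_mult)
        then show ?thesis by simp
      qed
      also have "\<dots> = x powr (2 * real m - 1 - 2 * s)"
        by (simp add: powr_add[symmetric] algebra_simps)
      finally show ?thesis using True by (simp add: indicator_def)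
    qed simp
  qed
  also have "\<dots> = ennreal (1 powr (2 * real m - 1 - 2 * s + 1) / (2 * real m - 1 - 2 * s + 1))"
    using s
    by (intro nn_integral_has_integral_lebesgue'[OF _ has_integral_powr_from_0]) auto
  also have "\<dots> = ennreal (1 / (2 * real m - 2 * s))"
    by simp
  finally show ?thesis .
qed

lemma nn_integral_radial_integrand_atLeast_1:
  assumes s: "0 < s"
  obtains L where "(\<integral>\<^sup>+x. ennreal (radial_integrand m s x) * indicator {1..} x \<partial>lborel) = ennreal L"
    and "0 \<le> L" and "\<bar>L - cos_power_coeff m m / (2 * s)\<bar> \<le> 3 * (\<Sum>j\<le>2*m. \<bar>cos_power_coeff m j\<bar>)"
proof -
  define A where "A = cos_power_coeff m m"
  define C where "C = (\<Sum>j\<le>2*m. \<bar>cos_power_coeff m j\<bar>)"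
  define X where "X = (\<lambda>n::nat. integral {1..1 + real n} (radial_integrand m s))"
  define Y where "Y n = A * (1 - (1 + real n) powr (-2 * s)) / (2 * s)" for n :: nat
  have cont: "continuous_on S (\<lambda>x. (1 - cos x)^m)" for S :: "real set"
    by (intro continuous_intros)
  have X_Y: "\<bar>X n - Y n\<bar> \<le> 3 * C" for n
    using powr_weighted_integral_estimate[OF s _ cos_power_osc_primitive_has_derivative[of m]
        abs_cos_power_osc_primitive_le[of m] cont, of "1 + real n"]
    unfolding X_def Y_def A_def C_def radial_integrand_def[abs_def] by simp
  have Y_le: "Y n \<le> A / (2 * s)" for n
    unfolding Y_def A_def using s by (simp add: divide_right_mono mult_left_le cos_power_coeff_middle)
  have X_le: "X n \<le> A / (2 * s) + 3 * C" for n
    using X_Y[of n] Y_le[of n] unfolding abs_le_iff by linarith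
  have "continuous_on {1..} (radial_integrand m s)"
    unfolding radial_integrand_def by (intro continuous_intros) auto
  then have "\<exists>L. (\<integral>\<^sup>+x. ennreal (radial_integrand m s x) * indicator {1..} x \<partial>lborel) = ennreal L
      \<and> X \<longlonglongrightarrow> L \<and> 0 \<le> L"
    by (rule nn_integral_atLeast_eq_limit[OF radial_integrand_borel])
       (use X_le radial_integrand_nonneg in \<open>auto simp: X_def\<close>)
  then obtain L where
    L: "(\<integral>\<^sup>+x. ennreal (radial_integrand m s x) * indicator {1..} x \<partial>lborel) = ennreal L"
      "0 \<le> L" and X_lim: "X \<longlonglongrightarrow> L"
    by blast
  have "(\<lambda>n. (1 + real n) powr (-2 * s)) \<longlonglongrightarrow> 0"
    using s by (intro tendsto_neg_powr filterlim_tendsto_add_at_top[OF tendsto_const filterlim_real_sequentially]) auto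
  then have "Y \<longlonglongrightarrow> A * (1 - 0) / (2 * s)"
    using s unfolding Y_def by (intro tendsto_intros) auto
  then have "(\<lambda>n. \<bar>X n - Y n\<bar>) \<longlonglongrightarrow> \<bar>L - A / (2 * s)\<bar>"
    using tendsto_rabs[OF tendsto_diff[OF X_lim]] by simp
  then have "\<bar>L - A / (2 * s)\<bar> \<le> 3 * C"
    by (rule LIMSEQ_le_const2) (use X_Y in auto)
  with L show ?thesis
    unfolding A_def C_def by (intro that)
qed

lemma radial_integral_estimate:
  assumes s: "0 < s" "s < real m"
  shows "radial_integral m s < \<infinity>"
    and "\<bar>s * enn2real (radial_integral m s) - cos_power_coeff m m / 2\<bar>
           \<le> s * (1 / (2 * real m - 2 * s) + 3 * (\<Sum>j\<le>2*m. \<bar>cos_power_coeff m j\<bar>))"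
proof -
  define A where "A = cos_power_coeff m m"
  define C where "C = (\<Sum>j\<le>2*m. \<bar>cos_power_coeff m j\<bar>)"
  have "ennreal (radial_integrand m s x) * indicator {0<..} x =
      ennreal (radial_integrand m s x) * indicator {0<..<1} x
      + ennreal (radial_integrand m s x) * indicator {1..} x" for x :: real
    by (auto simp: indicator_def)
  then have split: "radial_integral m s =
      (\<integral>\<^sup>+x. ennreal (radial_integrand m s x) * indicator {0<..<1} x \<partial>lborel)
      + (\<integral>\<^sup>+x. ennreal (radial_integrand m s x) * indicator {1..} x \<partial>lborel)"
    unfolding radial_integral_def by (simp add: nn_integral_add)
  obtain J0 where J0: "(\<integral>\<^sup>+x. ennreal (radial_integrand m s x) * indicator {0<..<1} x \<partial>lborel) = ennreal J0"
      "0 \<le> J0" "J0 \<le> 1 / (2 * real m - 2 * s)"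
    using nn_integral_radial_integrand_Ioo_le[OF s(2)] s le_ennreal_iff[of "1 / (2 * real m - 2 * s)"]
    by auto
  obtain L where L: "(\<integral>\<^sup>+x. ennreal (radial_integrand m s x) * indicator {1..} x \<partial>lborel) = ennreal L"
      "0 \<le> L" "\<bar>L - A / (2 * s)\<bar> \<le> 3 * C"
    using nn_integral_radial_integrand_atLeast_1[OF s(1)] unfolding A_def C_def by blast
  have J: "radial_integral m s = ennreal (J0 + L)"
    unfolding split J0(1) L(1) using J0(2) L(2) by (simp add: ennreal_plus)
  then show "radial_integral m s < \<infinity>"
    by simp
  have "s * (J0 + L) - A / 2 = s * J0 + s * (L - A / (2 * s))"
    using s by (simp add: field_simps)
  then have "\<bar>s * (J0 + L) - A / 2\<bar> \<le> s * J0 + s * \<bar>L - A / (2 * s)\<bar>"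
    using abs_triangle_ineq[of "s * J0" "s * (L - A / (2 * s))"] s J0(2) by (simp add: abs_mult)
  also have "\<dots> \<le> s * (1 / (2 * real m - 2 * s)) + s * (3 * C)"
    using s J0 L by (intro add_mono mult_left_mono) auto
  moreover have "enn2real (radial_integral m s) = J0 + L"
    unfolding J using J0(2) L(2) by (simp only: enn2real_ennreal add_nonneg_nonneg)
  ultimately show "\<bar>s * enn2real (radial_integral m s) - cos_power_coeff m m / 2\<bar>
      \<le> s * (1 / (2 * real m - 2 * s) + 3 * C)"
    unfolding A_def by (simp add: distrib_left)
qed

lemma tendsto_radial_integral:
  assumes m: "m \<ge> 1"
  shows "((\<lambda>s. s * enn2real (radial_integral m s)) \<longlongrightarrow> cos_power_coeff m m / 2) (at_right 0)"
proof -
  define K where "K = 1 / real m + 3 * (\<Sum>j\<le>2*m. \<bar>cos_power_coeff m j\<bar>)"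
  have "\<forall>\<^sub>F s in at_right 0. norm (s * enn2real (radial_integral m s) - cos_power_coeff m m / 2) \<le> s * K"
  proof (rule eventually_at_rightI)
    fix s :: real assume "s \<in> {0<..<real m / 2}"
    then have s: "0 < s" "s < real m" "s < real m / 2" by auto
    then have "1 / (2 * real m - 2 * s) \<le> 1 / real m"
      using m by (intro divide_left_mono) auto
    then have "s * (1 / (2 * real m - 2 * s) + 3 * (\<Sum>j\<le>2*m. \<bar>cos_power_coeff m j\<bar>)) \<le> s * K"
      unfolding K_def using s by (intro mult_left_mono) auto
    with radial_integral_estimate(2)[OF s(1,2)]
    show "norm (s * enn2real (radial_integral m s) - cos_power_coeff m m / 2) \<le> s * K"
      by simp
  qed (use m in simp)
  moreover have "((\<lambda>s. s * K) \<longlongrightarrow> 0) (at_right 0)"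
    by (intro tendsto_mult_left_zero tendsto_ident_at)
  ultimately have "((\<lambda>s. s * enn2real (radial_integral m s) - cos_power_coeff m m / 2) \<longlongrightarrow> 0) (at_right 0)"
    by (rule Lim_null_comparison)
  then show ?thesis
    by (simp only: LIM_zero_iff)
qed

lemma radial_integral_scale:
  assumes a: "0 < a"
  shows "(\<integral>\<^sup>+r. indicator {0<..} r * ennreal (r powr (-1 - 2 * s)) * ennreal ((1 - cos (a * r))^m) \<partial>lborel)
         = ennreal (a powr (2 * s)) * radial_integral m s"
proof -
  define G where
    "G r = indicator {0<..} r * ennreal (r powr (-1 - 2 * s)) * ennreal ((1 - cos (a * r))^m)" for r :: real
  have G_borel: "G \<in> borel_measurable lborel"
    unfolding G_def by measurable
  have G_scaled: "ennreal (radial_integrand m s (0 + a * x)) * indicator {0<..} (0 + a * x)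
      = ennreal (a powr (-1 - 2 * s)) * G x" for x
  proof (cases "0 < x")
    case True
    then have "radial_integrand m s (a * x) = a powr (-1 - 2 * s) * (x powr (-1 - 2 * s) * (1 - cos (a * x))^m)"
      unfolding radial_integrand_def using a by (simp add: powr_mult)
    then show ?thesis
      unfolding G_def using a True by (simp add: ennreal_mult[symmetric] mult.assoc)
  next
    case False
    then show ?thesis
      unfolding G_def using a by (simp add: zero_less_mult_iff)
  qed
  have "radial_integral m s
      = ennreal \<bar>a\<bar> * (\<integral>\<^sup>+x. ennreal (radial_integrand m s (0 + a * x)) * indicator {0<..} (0 + a * x) \<partial>lborel)"
    unfolding radial_integral_def by (rule nn_integral_real_affine) (use a in auto)
  also have "\<dots> = ennreal (a * a powr (-1 - 2 * s)) * integral\<^sup>N lborel G"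
    unfolding G_scaled nn_integral_cmult[OF G_borel] using a by (simp add: ennreal_mult mult.assoc)
  also have "a * a powr (-1 - 2 * s) = a powr (-2 * s)"
    using powr_add[of a 1 "-1 - 2 * s"] a by simp
  finally have "ennreal (a powr (2 * s)) * radial_integral m s
      = ennreal (a powr (2 * s) * a powr (-2 * s)) * integral\<^sup>N lborel G"
    using a by (simp add: ennreal_mult mult.assoc)
  also have "a powr (2 * s) * a powr (-2 * s) = 1"
    using a by (simp add: powr_add[symmetric])
  finally show ?thesis
    unfolding G_def by simp
qed

lemma nn_integral_radial_one_minus_cos_power:
  assumes m: "m \<ge> 1"
  shows "(\<integral>\<^sup>+r. indicator {0<..} r * ennreal (r powr (-1 - 2 * s)) * ennreal ((1 - cos (r * c))^m) \<partial>lborel)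
         = ennreal (\<bar>c\<bar> powr (2 * s)) * radial_integral m s"
proof (cases "c = 0")
  case True
  with m show ?thesis by (simp add: power_0_left)
next
  case False
  have "cos (r * c) = cos (\<bar>c\<bar> * r)" for r
    by (cases "0 \<le> c") (auto simp: mult.commute)
  with False show ?thesis
    by (simp add: radial_integral_scale)
qed

section \<open>Polar coordinates and the spherical factor\<close>

lemma nn_integral_nu_s:
  fixes \<sigma> :: "'a::euclidean_space measure"
  assumes sets_\<sigma>: "sets \<sigma> = sets borel" and "sigma_finite_measure \<sigma>"
    and g[measurable]: "g \<in> borel_measurable borel"
  shows "(\<integral>\<^sup>+y. g y \<partial>nu_s s \<sigma>)
    = (\<integral>\<^sup>+\<theta>. (\<integral>\<^sup>+r. indicator {0<..} r * ennreal (r powr (-1 - 2 * s)) * g (r *\<^sub>R \<theta>) \<partial>lborel) \<partial>\<sigma>)"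
proof -
  define d where "d r = indicator {0<..} r * ennreal (r powr (-1 - 2 * s))" for r :: real
  define D where "D = density lborel d"
  have d_borel: "d \<in> borel_measurable lborel"
    unfolding d_def by measurable
  have "sigma_finite_measure D"
    unfolding D_def
    by (subst sigma_finite_measure.sigma_finite_iff_density_finite[OF sigma_finite_lborel d_borel])
       (auto simp: d_def indicator_def)
  then interpret pair_sigma_finite D \<sigma>
    unfolding pair_sigma_finite_def using assms(2) by blast
  have "sets (D \<Otimes>\<^sub>M \<sigma>) = sets (borel \<Otimes>\<^sub>M borel)"
    by (rule sets_pair_measure_cong) (simp_all add: D_def sets_\<sigma>)
  moreover have "(\<lambda>(r::real, \<theta>::'a). r *\<^sub>R \<theta>) \<in> borel_measurable (borel \<Otimes>\<^sub>M borel)"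
    by measurable
  ultimately have polar_borel: "(\<lambda>(r, \<theta>). r *\<^sub>R \<theta>) \<in> borel_measurable (D \<Otimes>\<^sub>M \<sigma>)"
    using measurable_cong_sets by blast
  have "(\<integral>\<^sup>+y. g y \<partial>nu_s s \<sigma>) = (\<integral>\<^sup>+x. g (case x of (r, \<theta>) \<Rightarrow> r *\<^sub>R \<theta>) \<partial>(D \<Otimes>\<^sub>M \<sigma>))"
    unfolding nu_s_def D_def[symmetric] d_def[symmetric, abs_def]
    by (rule nn_integral_distr[OF polar_borel]) (use g in simp)
  also have "\<dots> = (\<integral>\<^sup>+\<theta>. (\<integral>\<^sup>+r. g (r *\<^sub>R \<theta>) \<partial>D) \<partial>\<sigma>)"
    using nn_integral_snd[OF measurable_compose[OF polar_borel g]] by (simp add: case_prod_beta)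
  also have "\<dots> = (\<integral>\<^sup>+\<theta>. (\<integral>\<^sup>+r. d r * g (r *\<^sub>R \<theta>) \<partial>lborel) \<partial>\<sigma>)"
    unfolding D_def using g by (intro nn_integral_cong nn_integral_density d_borel) measurable
  finally show ?thesis
    unfolding d_def .
qed

lemma nn_integral_nu_s_one_minus_cos_power:
  fixes \<sigma> :: "'a::euclidean_space measure" and e :: 'a
  assumes sets_\<sigma>: "sets \<sigma> = sets borel" and "sigma_finite_measure \<sigma>" and m: "m \<ge> 1"
  shows "(\<integral>\<^sup>+y. ennreal ((1 - cos (e \<bullet> y))^m) \<partial>nu_s s \<sigma>)
    = radial_integral m s * (\<integral>\<^sup>+\<theta>. ennreal (\<bar>e \<bullet> \<theta>\<bar> powr (2 * s)) \<partial>\<sigma>)"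
proof -
  have inner: "(\<integral>\<^sup>+r. indicator {0<..} r * ennreal (r powr (-1 - 2 * s)) * ennreal ((1 - cos (e \<bullet> (r *\<^sub>R \<theta>)))^m) \<partial>lborel)
      = ennreal (\<bar>e \<bullet> \<theta>\<bar> powr (2 * s)) * radial_integral m s" for \<theta>
    unfolding inner_scaleR_right by (rule nn_integral_radial_one_minus_cos_power[OF m])
  have g: "(\<lambda>y. ennreal ((1 - cos (e \<bullet> y))^m)) \<in> borel_measurable borel"
    by measurable
  have "(\<integral>\<^sup>+y. ennreal ((1 - cos (e \<bullet> y))^m) \<partial>nu_s s \<sigma>)
      = (\<integral>\<^sup>+\<theta>. ennreal (\<bar>e \<bullet> \<theta>\<bar> powr (2 * s)) * radial_integral m s \<partial>\<sigma>)"
    unfolding nn_integral_nu_s[OF assms(1,2) g] inner ..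
  also have "\<dots> = (\<integral>\<^sup>+\<theta>. ennreal (\<bar>e \<bullet> \<theta>\<bar> powr (2 * s)) \<partial>\<sigma>) * radial_integral m s"
  proof (rule nn_integral_multc)
    have "(\<lambda>\<theta>. ennreal (\<bar>e \<bullet> \<theta>\<bar> powr (2 * s))) \<in> borel_measurable borel"
      by measurable
    then show "(\<lambda>\<theta>. ennreal (\<bar>e \<bullet> \<theta>\<bar> powr (2 * s))) \<in> borel_measurable \<sigma>"
      using measurable_cong_sets[OF sets_\<sigma> refl] by blast
  qed
  finally show ?thesis
    by (simp only: mult.commute)
qed

lemma AE_norm_eq_1_if_emeasure_sphere:
  fixes \<sigma> :: "'a::real_normed_vector measure"
  assumes "prob_space \<sigma>" and "sets \<sigma> = sets borel" and "emeasure \<sigma> (sphere 0 1) = 1"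
  shows "AE \<theta> in \<sigma>. norm \<theta> = 1"
proof -
  interpret prob_space \<sigma> by fact
  have "AE \<theta> in \<sigma>. \<theta> \<in> sphere 0 1"
    using assms(2,3) by (intro AE_prob_1) (simp_all add: measure_def)
  then show ?thesis
    by eventually_elim simp
qed

lemma integrable_M_s_integrand:
  fixes \<sigma> :: "'a::euclidean_space measure"
  assumes "prob_space \<sigma>" and sets_\<sigma>: "sets \<sigma> = sets borel" and "emeasure \<sigma> (sphere 0 1) = 1"
    and s: "0 \<le> s"
  shows "integrable \<sigma> (\<lambda>\<theta>. \<bar>x \<bullet> \<theta>\<bar> powr (2 * s))"
proof -
  interpret prob_space \<sigma> by fact
  have "(\<lambda>\<theta>::'a. \<bar>x \<bullet> \<theta>\<bar> powr (2 * s)) \<in> borel_measurable borel"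
    by measurable
  then have "(\<lambda>\<theta>. \<bar>x \<bullet> \<theta>\<bar> powr (2 * s)) \<in> borel_measurable \<sigma>"
    using measurable_cong_sets[OF sets_\<sigma> refl] by blast
  moreover have "AE \<theta> in \<sigma>. norm (\<bar>x \<bullet> \<theta>\<bar> powr (2 * s)) \<le> norm x powr (2 * s)"
    using AE_norm_eq_1_if_emeasure_sphere[OF assms(1-3)]
  proof eventually_elim
    fix \<theta> :: 'a assume "norm \<theta> = 1"
    then have "\<bar>x \<bullet> \<theta>\<bar> \<le> norm x"
      using Cauchy_Schwarz_ineq2[of x \<theta>] by simp
    then show "norm (\<bar>x \<bullet> \<theta>\<bar> powr (2 * s)) \<le> norm x powr (2 * s)"
      using s by (simp add: powr_mono2)
  qed
  ultimately show ?thesis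
    by (rule integrable_const_bound[rotated])
qed

lemma nn_integral_eq_M_s:
  fixes \<sigma> :: "'a::euclidean_space measure"
  assumes "prob_space \<sigma>" and "sets \<sigma> = sets borel" and "emeasure \<sigma> (sphere 0 1) = 1"
    and "0 \<le> s"
  shows "(\<integral>\<^sup>+\<theta>. ennreal (\<bar>x \<bullet> \<theta>\<bar> powr (2 * s)) \<partial>\<sigma>) = ennreal (M_s s \<sigma> x)"
  unfolding M_s_def by (rule nn_integral_eq_integral[OF integrable_M_s_integrand[OF assms]]) simp

lemma sum_Basis_abs_inner_powr_pos:
  fixes \<theta> :: "'a::euclidean_space"
  assumes "\<theta> \<noteq> 0"
  shows "0 < (\<Sum>b\<in>Basis. \<bar>b \<bullet> \<theta>\<bar> powr p)"
proof -
  obtain b where b: "b \<in> Basis" "\<theta> \<bullet> b \<noteq> 0"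
    using euclidean_all_zero_iff[of \<theta>] assms by auto
  then have "0 < \<bar>b \<bullet> \<theta>\<bar> powr p"
    by (simp add: inner_commute)
  then show ?thesis
    by (intro sum_pos2[OF _ b(1)]) auto
qed

text \<open>Summing \<open>M_s\<close> over the standard basis integrates a function that is positive on the
  sphere, so \<open>M_s\<close> cannot be nonpositive at a maximum.\<close>
lemma M_s_pos_at_maximum:
  fixes \<sigma> :: "'a::euclidean_space measure" and e :: 'a
  assumes prob: "prob_space \<sigma>" and sets_\<sigma>: "sets \<sigma> = sets borel"
    and sphere: "emeasure \<sigma> (sphere 0 1) = 1" and s: "0 \<le> s"
    and e_max: "\<And>x. x \<in> sphere 0 1 \<Longrightarrow> M_s s \<sigma> x \<le> M_s s \<sigma> e"
  shows "0 < M_s s \<sigma> e"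
proof (rule ccontr)
  assume "\<not> 0 < M_s s \<sigma> e"
  interpret prob_space \<sigma> by (rule prob)
  define g where "g \<theta> = (\<Sum>b\<in>Basis. \<bar>b \<bullet> \<theta>\<bar> powr (2 * s))" for \<theta> :: 'a
  note integrable = integrable_M_s_integrand[OF prob sets_\<sigma> sphere s]
  have g_integrable: "integrable \<sigma> g"
    unfolding g_def by (intro Bochner_Integration.integrable_sum integrable)
  have "integral\<^sup>L \<sigma> g = (\<Sum>b\<in>Basis. M_s s \<sigma> b)"
    unfolding g_def M_s_def by (intro Bochner_Integration.integral_sum integrable)
  also have "\<dots> \<le> 0"
  proof (rule sum_nonpos)
    fix b :: 'a assume "b \<in> Basis"
    then have "M_s s \<sigma> b \<le> M_s s \<sigma> e"
      by (intro e_max) simp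
    with \<open>\<not> 0 < M_s s \<sigma> e\<close> show "M_s s \<sigma> b \<le> 0"
      by simp
  qed
  finally have "integral\<^sup>L \<sigma> g \<le> 0" .
  moreover have g_nonneg: "AE \<theta> in \<sigma>. 0 \<le> g \<theta>"
    unfolding g_def by (intro AE_I2 sum_nonneg) simp
  ultimately have "AE \<theta> in \<sigma>. g \<theta> = 0"
    using integral_nonneg_AE[OF g_nonneg] integral_nonneg_eq_0_iff_AE[OF g_integrable g_nonneg] by simp
  moreover have "AE \<theta> in \<sigma>. 0 < g \<theta>"
    using AE_norm_eq_1_if_emeasure_sphere[OF prob sets_\<sigma> sphere]
    by eventually_elim (auto simp: g_def intro: sum_Basis_abs_inner_powr_pos)
  ultimately have "AE \<theta> in \<sigma>. False"
    by eventually_elim simp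
  then show False
    by simp
qed

lemma c_ms_div_mult_M_s:
  fixes \<sigma> :: "'a::euclidean_space measure" and e :: 'a
  assumes m: "m \<ge> 1" and s: "0 < s" "s < real m"
    and prob: "prob_space \<sigma>" and sets_\<sigma>: "sets \<sigma> = sets borel"
    and sphere: "emeasure \<sigma> (sphere 0 1) = 1"
    and e_max: "\<And>x. x \<in> sphere 0 1 \<Longrightarrow> M_s s \<sigma> x \<le> M_s s \<sigma> e"
  shows "c_ms m s \<sigma> e / s * M_s s \<sigma> e = 2 / (2 ^ m * (s * enn2real (radial_integral m s)))"
proof -
  define J where "J = enn2real (radial_integral m s)"
  define M where "M = M_s s \<sigma> e"
  have M_pos: "0 < M"
    unfolding M_def using s by (intro M_s_pos_at_maximum[OF prob sets_\<sigma> sphere _ e_max]) auto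
  have J: "radial_integral m s = ennreal J" "0 \<le> J"
    using radial_integral_estimate(1)[OF s] by (simp_all add: J_def)
  have "sigma_finite_measure \<sigma>"
    using prob by (simp add: prob_space_imp_sigma_finite)
  then have "(\<integral>\<^sup>+y. ennreal ((1 - cos (e \<bullet> y))^m) \<partial>nu_s s \<sigma>) = ennreal (J * M)"
    using s M_pos J unfolding M_def
    by (simp add: nn_integral_nu_s_one_minus_cos_power[OF sets_\<sigma> _ m]
        nn_integral_eq_M_s[OF prob sets_\<sigma> sphere] ennreal_mult)
  moreover have "(\<lambda>y. (1 - cos (e \<bullet> y))^m) \<in> borel_measurable (nu_s s \<sigma>)"
    unfolding nu_s_def by simp
  ultimately have "(\<integral>y. (1 - cos (e \<bullet> y))^m \<partial>nu_s s \<sigma>) = J * M"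
    using J M_pos by (subst integral_eq_nn_integral) simp_all
  then have "c_ms m s \<sigma> e = 2 / (2 ^ m * (J * M))"
    unfolding c_ms_def by (simp only:)
  then show ?thesis
    unfolding J_def[symmetric] M_def[symmetric] using M_pos s
    by (cases "J = 0") (simp_all add: field_simps)
qed

theorem lemma3p7:
  fixes m :: nat
    and \<sigma> :: "real \<Rightarrow> 'a::euclidean_space measure"
    and e :: "real \<Rightarrow> 'a"
  assumes m: "m \<ge> 1"
    and borel: "\<And>s. s \<in> {0<..<real m} \<Longrightarrow> sets (\<sigma> s) = sets borel"
    and prob: "\<And>s. s \<in> {0<..<real m} \<Longrightarrow> prob_space (\<sigma> s)"
    and on_sphere: "\<And>s. s \<in> {0<..<real m} \<Longrightarrow> emeasure (\<sigma> s) (sphere 0 1) = 1"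
    and e_sphere: "\<And>s. s \<in> {0<..<real m} \<Longrightarrow> e s \<in> sphere 0 1"
    and e_max: "\<And>s x. s \<in> {0<..<real m} \<Longrightarrow> x \<in> sphere 0 1 \<Longrightarrow>
                   M_s s (\<sigma> s) x \<le> M_s s (\<sigma> s) (e s)"
  shows "((\<lambda>s. c_ms m s (\<sigma> s) (e s) / s * M_s s (\<sigma> s) (e s)) \<longlongrightarrow> 2 / (- P0 m)) (at_right 0)
         \<and> P0 m = - (1/2) * real ((2 * m) choose m)"
proof
  show P0: "P0 m = - (1/2) * real ((2 * m) choose m)"
    using m by (rule P0_eq_neg_half_central_binomial)
  have "((\<lambda>s. 2 / (2 ^ m * (s * enn2real (radial_integral m s))))
      \<longlongrightarrow> 2 / (2 ^ m * (cos_power_coeff m m / 2))) (at_right 0)"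
    by (intro tendsto_divide tendsto_mult tendsto_const tendsto_radial_integral m)
       (simp add: cos_power_coeff_middle)
  moreover have "\<forall>\<^sub>F s in at_right 0.
      2 / (2 ^ m * (s * enn2real (radial_integral m s))) = c_ms m s (\<sigma> s) (e s) / s * M_s s (\<sigma> s) (e s)"
  proof (rule eventually_at_rightI)
    fix s :: real assume s: "s \<in> {0<..<real m}"
    then show "2 / (2 ^ m * (s * enn2real (radial_integral m s))) = c_ms m s (\<sigma> s) (e s) / s * M_s s (\<sigma> s) (e s)"
      using c_ms_div_mult_M_s[OF m _ _ prob[OF s] borel[OF s] on_sphere[OF s] e_max[OF s]] by simp
  qed (use m in simp)
  ultimately have "((\<lambda>s. c_ms m s (\<sigma> s) (e s) / s * M_s s (\<sigma> s) (e s))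
      \<longlongrightarrow> 2 / (2 ^ m * (cos_power_coeff m m / 2))) (at_right 0)"
    by (rule Lim_transform_eventually)
  moreover have "2 ^ m * (cos_power_coeff m m / 2) = - P0 m"
    unfolding P0 cos_power_coeff_middle by simp
  ultimately show "((\<lambda>s. c_ms m s (\<sigma> s) (e s) / s * M_s s (\<sigma> s) (e s)) \<longlongrightarrow> 2 / (- P0 m)) (at_right 0)"
    by simp
qed

end
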